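(* Let $p$ be a state. The interior of $p^{TP}=\{Tp:T\in TP(d)\}$, taken relative to the affine hyperplane $\{x\in\mathbb{R}^d:\sum_i x_i=1\}$, consists exactly of the states $r$ such that every elbow $(x,y)$ of $\beta(r)$ lies strictly below $\beta(p)$, i.e. $y<\beta(p)(x)$.
   Context: Fix $d\ge 2$, $\beta\in(0,\infty)$ and pairwise distinct reals $E_0=0,E_1,\dots,E_{d-1}$. Put $q_{m,n}=e^{-\beta(E_m-E_n)}$, $Z=\sum_j q_{j,0}$, $g_i=q_{i,0}/Z$. A state is a probability vector in $\mathbb{R}^d$. $TP(d)$ is the set of $d\times d$ real matrices with non-negative entries, columns summing to $1$, and $Tg=g$. For a state $p$ choose a permutation $\pi$ of $\{0,\dots,d-1\}$ with $p_{\pi(0)}/g_{\pi(0)}\ge\dots\ge p_{\pi(d-1)}/g_{\pi(d-1)}$; let $x_k=\sum_{i\le k}g_{\pi(i)}$, $y_k=\sum_{i\le k}p_{\pi(i)}$. The thermomajorization curve $\beta(p)$ is the graph of the concave piecewise-linear function $\beta(p)(\cdot)$ on $[0,1]$ through $(0,0),(x_0,y_0),\dots,(x_{d-1},y_{d-1})=(1,1)$. The elbows of $\beta(p)$ are the points $(x_k,y_k)$ for $k=0,\dots,d-2$. *)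

theory Defs
  imports "HOL-Analysis.Analysis"
begin

definition gibbs :: "real \<Rightarrow> ('n::finite \<Rightarrow> real) \<Rightarrow> real^'n" where
  "gibbs beta E = (\<chi> i. exp (- beta * E i) / (\<Sum>j\<in>UNIV. exp (- beta * E j)))"

definition is_state :: "real^'n::finite \<Rightarrow> bool" where
  "is_state p \<longleftrightarrow> (\<forall>i. 0 \<le> p $ i) \<and> (\<Sum>i\<in>UNIV. p $ i) = 1"

definition TP :: "real^'n::finite \<Rightarrow> (real^'n^'n) set" where
  "TP g = {T. (\<forall>i j. 0 \<le> T $ i $ j) \<and> (\<forall>j. (\<Sum>i\<in>UNIV. T $ i $ j) = 1) \<and> T *v g = g}"

definition TP_orbit :: "real^'n::finite \<Rightarrow> real^'n \<Rightarrow> (real^'n) set" where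
  "TP_orbit g p = {T *v p | T. T \<in> TP g}"

definition hyperplane1 :: "(real^'n::finite) set" where
  "hyperplane1 = {x. (\<Sum>i\<in>UNIV. x $ i) = 1}"

definition tm_order :: "real^'n::finite \<Rightarrow> real^'n \<Rightarrow> (nat \<Rightarrow> 'n) \<Rightarrow> bool" where
  "tm_order g p \<pi> \<longleftrightarrow> bij_betw \<pi> {..<CARD('n)} UNIV \<and>
     (\<forall>i j. i \<le> j \<and> j < CARD('n) \<longrightarrow> p $ (\<pi> j) / g $ (\<pi> j) \<le> p $ (\<pi> i) / g $ (\<pi> i))"

definition tm_perm :: "real^'n::finite \<Rightarrow> real^'n \<Rightarrow> (nat \<Rightarrow> 'n)" where
  "tm_perm g p = (SOME \<pi>. tm_order g p \<pi>)"

text \<open>X k = x_{k-1}, Y k = y_{k-1}, with X 0 = Y 0 = 0 (the point (0,0)).\<close>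
definition tmX :: "real^'n::finite \<Rightarrow> real^'n \<Rightarrow> nat \<Rightarrow> real" where
  "tmX g p k = (\<Sum>i<k. g $ (tm_perm g p i))"

definition tmY :: "real^'n::finite \<Rightarrow> real^'n \<Rightarrow> nat \<Rightarrow> real" where
  "tmY g p k = (\<Sum>i<k. p $ (tm_perm g p i))"

text \<open>The piecewise-linear function beta(p)(t) on [0,1] through (0,0),(x_0,y_0),...,(x_{d-1},y_{d-1}).\<close>
definition tm_curve :: "real^'n::finite \<Rightarrow> real^'n \<Rightarrow> real \<Rightarrow> real" where
  "tm_curve g p t =
     (let k = (LEAST k. t \<le> tmX g p (Suc k))
      in tmY g p k + (t - tmX g p k) * (tmY g p (Suc k) - tmY g p k) / (tmX g p (Suc k) - tmX g p k))"

definition elbows :: "real^'n::finite \<Rightarrow> real^'n \<Rightarrow> (real \<times> real) set" where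
  "elbows g p = {(tmX g p (Suc k), tmY g p (Suc k)) | k. k \<le> CARD('n) - 2}"

end

theory Submission
  imports Defs
begin

(* Write F_q(t) = \<Sum>i (q_i - t g_i)\<^sup>+ (the "excess" below). The curve \<beta>(q) is the concave
   conjugate of F_q: \<beta>(q)(x) = min_t (F_q(t) + t x), the minimum being attained at the slope of
   the segment of \<beta>(q) that contains x.

   A state q lies in the orbit of p iff F_q \<le> F_p. Necessity holds because a thermal process
   is column-stochastic and fixes g. For sufficiency, separate q from the compact convex orbit
   by a hyperplane; the linear functional is maximised over the orbit at an explicit vertex
   read off from \<beta>(p), and summation by parts shows that q cannot beat this vertex.

   If r is interior, shifting a little mass from the entry of r with the smallest ratio r_i/g_i
   to the one with the largest keeps r in the orbit and raises every elbow of \<beta>(r), so the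
   elbows lie strictly below \<beta>(p). Conversely, if they do, then F_r < F_p on a compact
   interval [t1, t0] of slopes, while outside it every state near r has the least possible
   values F = 0 (for t \<ge> t0) and F = 1 - t (for t \<le> t1); hence a whole neighbourhood of r in
   the hyperplane satisfies F \<le> F_p. *)

section \<open>Enumerations and prefix sums\<close>

abbreviation enumeration :: "(nat \<Rightarrow> 'n::finite) \<Rightarrow> bool" where
  "enumeration \<sigma> \<equiv> bij_betw \<sigma> {..<CARD('n)} UNIV"

lemma exists_sorting_enumeration:
  fixes f :: "'n::finite \<Rightarrow> real"
  shows "\<exists>\<sigma>. enumeration \<sigma> \<and> (\<forall>i j. i \<le> j \<and> j < CARD('n) \<longrightarrow> f (\<sigma> j) \<le> f (\<sigma> i))"
proof -
  obtain xs :: "'n list" where xs: "set xs = UNIV" "distinct xs"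
    using finite_distinct_list[OF finite[of "UNIV :: 'n set"]] by blast
  define ys where "ys = sort_key (\<lambda>i. - f i) xs"
  have ys: "set ys = UNIV" "distinct ys" "length ys = CARD('n)"
    using xs distinct_card[of ys] by (simp_all add: ys_def)
  have sorted: "sorted (map (\<lambda>i. - f i) ys)" by (simp add: ys_def)
  show ?thesis
  proof (intro exI conjI allI impI)
    show "enumeration ((!) ys)" using ys by (intro bij_betw_nth) auto
    fix i j assume "i \<le> j \<and> j < CARD('n)"
    then show "f (ys ! j) \<le> f (ys ! i)"
      using sorted_nth_mono[OF sorted, of i j] ys by simp
  qed
qed

definition prefix_sum :: "(nat \<Rightarrow> 'n) \<Rightarrow> ('n \<Rightarrow> real) \<Rightarrow> nat \<Rightarrow> real" where
  "prefix_sum \<sigma> f k = (\<Sum>i<k. f (\<sigma> i))"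

definition rank :: "(nat \<Rightarrow> 'n::finite) \<Rightarrow> 'n \<Rightarrow> nat" where
  "rank \<sigma> = inv_into {..<CARD('n)} \<sigma>"

lemma prefix_sum_0 [simp]: "prefix_sum \<sigma> f 0 = 0"
  by (simp add: prefix_sum_def)

lemma prefix_sum_Suc: "prefix_sum \<sigma> f (Suc k) = prefix_sum \<sigma> f k + f (\<sigma> k)"
  by (simp add: prefix_sum_def)

lemma sum_enumeration:
  fixes \<sigma> :: "nat \<Rightarrow> 'n::finite"
  assumes "enumeration \<sigma>"
  shows "(\<Sum>i\<in>UNIV. f i) = (\<Sum>k<CARD('n). f (\<sigma> k))"
  using sum.reindex_bij_betw[OF assms, of f] by simp

lemma prefix_sum_CARD:
  fixes \<sigma> :: "nat \<Rightarrow> 'n::finite"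
  assumes "enumeration \<sigma>"
  shows "prefix_sum \<sigma> f CARD('n) = (\<Sum>i\<in>UNIV. f i)"
  unfolding prefix_sum_def sum_enumeration[OF assms] ..

lemma
  fixes \<sigma> :: "nat \<Rightarrow> 'n::finite"
  assumes "enumeration \<sigma>"
  shows rank_less_CARD: "rank \<sigma> j < CARD('n)"
    and enumeration_rank: "\<sigma> (rank \<sigma> j) = j"
    and rank_enumeration: "k < CARD('n) \<Longrightarrow> rank \<sigma> (\<sigma> k) = k"
  using assms unfolding rank_def bij_betw_def
  by (metis UNIV_I inv_into_into lessThan_iff, metis UNIV_I f_inv_into_f,
      metis inv_into_f_f lessThan_iff)

lemma sum_rank:
  fixes \<sigma> :: "nat \<Rightarrow> 'n::finite"
  assumes "enumeration \<sigma>"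
  shows "(\<Sum>i\<in>UNIV. f (rank \<sigma> i)) = (\<Sum>k<CARD('n). f k)"
  by (simp add: sum_enumeration[OF assms] rank_enumeration[OF assms])

lemma summation_by_parts:
  fixes a D :: "nat \<Rightarrow> real"
  shows "(\<Sum>k<n. a k * (D (Suc k) - D k)) =
    (\<Sum>k<n. (a k - a (Suc k)) * D (Suc k)) + a n * D n - a 0 * D 0"
  by (induction n) (simp_all add: algebra_simps)

lemma summation_by_parts_nonneg:
  fixes a D :: "nat \<Rightarrow> real"
  assumes antimono: "\<And>k. Suc k < n \<Longrightarrow> a (Suc k) \<le> a k"
    and D_nonneg: "\<And>k. k \<le> n \<Longrightarrow> 0 \<le> D k" and "D 0 = 0" and "D n = 0"
  shows "0 \<le> (\<Sum>k<n. a k * (D (Suc k) - D k))"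
proof -
  have "0 \<le> (a k - a (Suc k)) * D (Suc k)" if "k < n" for k
    using that antimono[of k] D_nonneg[of "Suc k"] \<open>D n = 0\<close>
    by (cases "Suc k = n") auto
  then have "0 \<le> (\<Sum>k<n. (a k - a (Suc k)) * D (Suc k))"
    by (intro sum_nonneg) auto
  then show ?thesis using summation_by_parts[of a D n] assms(3,4) by simp
qed

lemma sum_axis: "(\<Sum>i\<in>UNIV. axis a c $ i) = c"
  by (simp add: axis_def)

lemma prefix_sum_transfer:
  fixes \<sigma> :: "nat \<Rightarrow> 'n::finite"
  assumes \<sigma>: "enumeration \<sigma>" and m: "0 < m" "m < CARD('n)"
  shows "prefix_sum \<sigma> (($) (r + c *\<^sub>R (axis (\<sigma> 0) 1 - axis (\<sigma> (CARD('n) - 1)) 1))) m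
    = prefix_sum \<sigma> (($) r) m + c"
proof -
  have inj: "inj_on \<sigma> {..<CARD('n)}"
    using \<sigma> by (rule bij_betw_imp_inj_on)
  have "\<sigma> i = \<sigma> 0 \<longleftrightarrow> i = 0" "\<sigma> i \<noteq> \<sigma> (CARD('n) - 1)" if "i < m" for i
    using inj_on_eq_iff[OF inj, of i 0] inj_on_eq_iff[OF inj, of i "CARD('n) - 1"] that m by auto
  then have "(\<Sum>i<m. (axis (\<sigma> 0) 1 - axis (\<sigma> (CARD('n) - 1)) 1) $ \<sigma> i)
      = (\<Sum>i<m. if i = 0 then 1 else 0 :: real)"
    by (intro sum.cong) (auto simp: axis_def)
  then show ?thesis
    using m by (simp add: prefix_sum_def sum.distrib sum_distrib_left[symmetric])
qed

section \<open>Thermal processes\<close>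

lemma matrix_vector_mult_nth: "(T *v v) $ i = (\<Sum>j\<in>UNIV. T $ i $ j * v $ j)"
  by (simp add: matrix_vector_mult_def)

lemma is_state_TP_mult:
  assumes p: "is_state p" and T: "T \<in> TP g"
  shows "is_state (T *v p)"
proof -
  have T_nonneg: "\<forall>i j. 0 \<le> T $ i $ j" and T_cols: "\<forall>j. (\<Sum>i\<in>UNIV. T $ i $ j) = 1"
    using T unfolding TP_def by auto
  have "(\<Sum>i\<in>UNIV. (T *v p) $ i) = (\<Sum>j\<in>UNIV. (\<Sum>i\<in>UNIV. T $ i $ j) * p $ j)"
    unfolding matrix_vector_mult_nth sum_distrib_right by (rule sum.swap)
  then show ?thesis
    using T_nonneg T_cols p unfolding is_state_def matrix_vector_mult_nth
    by (auto intro!: sum_nonneg)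
qed

lemma TP_convex_combination:
  assumes A: "A \<in> TP g" and B: "B \<in> TP g" and uv: "0 \<le> u" "0 \<le> v" "u + v = 1"
  shows "u *\<^sub>R A + v *\<^sub>R B \<in> TP g"
    and "(u *\<^sub>R A + v *\<^sub>R B) *v x = u *\<^sub>R (A *v x) + v *\<^sub>R (B *v x)"
proof -
  show mult: "(u *\<^sub>R A + v *\<^sub>R B) *v x = u *\<^sub>R (A *v x) + v *\<^sub>R (B *v x)" for x
    by (simp add: vec_eq_iff matrix_vector_mult_nth sum.distrib sum_distrib_left algebra_simps)
  have "(u *\<^sub>R A + v *\<^sub>R B) *v g = g"
    using A B uv unfolding mult TP_def by (simp flip: scaleR_add_left)
  then show "u *\<^sub>R A + v *\<^sub>R B \<in> TP g"
    using A B uv unfolding TP_def by (simp add: sum.distrib sum_distrib_left[symmetric])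
qed

lemma convex_TP_orbit: "convex (TP_orbit (g :: real^'n::finite) p)"
  unfolding convex_def TP_orbit_def
proof clarify
  fix A B :: "real^'n^'n" and u v :: real
  assume "A \<in> TP g" "B \<in> TP g" "0 \<le> u" "0 \<le> v" "u + v = 1"
  then show "\<exists>T. u *\<^sub>R (A *v p) + v *\<^sub>R (B *v p) = T *v p \<and> T \<in> TP g"
    using TP_convex_combination by metis
qed

lemma closed_TP: "closed (TP g)"
proof -
  have "TP g = (\<Inter>i j. {T. 0 \<le> T $ i $ j}) \<inter> (\<Inter>j. {T. (\<Sum>i\<in>UNIV. T $ i $ j) = 1})
      \<inter> {T. T *v g = g}"
    unfolding TP_def by auto
  then show ?thesis
    unfolding matrix_vector_mult_def
    by (simp only:) (intro closed_Int closed_INT ballI closed_Collect_le closed_Collect_eq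
        continuous_intros)
qed

lemma bounded_TP: "bounded (TP (g :: real^'n::finite))"
  unfolding bounded_iff
proof (intro exI ballI)
  fix T assume T: "T \<in> TP g"
  have "\<bar>T $ i $ j\<bar> \<le> 1" for i j
  proof -
    have "T $ i $ j \<le> (\<Sum>i\<in>UNIV. T $ i $ j)"
      using T unfolding TP_def by (intro member_le_sum) auto
    then show ?thesis using T unfolding TP_def by auto
  qed
  then have "(\<Sum>i\<in>UNIV. \<Sum>j\<in>UNIV. \<bar>T $ i $ j\<bar>) \<le> (\<Sum>i\<in>(UNIV::'n set). \<Sum>j\<in>(UNIV::'n set). 1)"
    by (intro sum_mono)
  moreover have "norm T \<le> (\<Sum>i\<in>UNIV. \<Sum>j\<in>UNIV. \<bar>T $ i $ j\<bar>)"
  proof -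
    have "norm T \<le> (\<Sum>i\<in>UNIV. norm (T $ i))"
      by (simp add: norm_vec_def L2_set_le_sum)
    also have "\<dots> \<le> (\<Sum>i\<in>UNIV. \<Sum>j\<in>UNIV. \<bar>T $ i $ j\<bar>)"
      by (intro sum_mono norm_le_l1_cart)
    finally show ?thesis .
  qed
  ultimately show "norm T \<le> real CARD('n) * real CARD('n)" by simp
qed

lemma closed_TP_orbit: "closed (TP_orbit g p)"
proof -
  have "compact (TP g)"
    unfolding compact_eq_bounded_closed by (simp add: closed_TP bounded_TP)
  then have "compact ((\<lambda>T. T *v p) ` TP g)"
    unfolding matrix_vector_mult_def by (intro compact_continuous_image continuous_intros)
  moreover have "TP_orbit g p = (\<lambda>T. T *v p) ` TP g"
    unfolding TP_orbit_def by auto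
  ultimately show ?thesis by (simp add: compact_imp_closed)
qed

lemma is_state_if_in_TP_orbit: "is_state p \<Longrightarrow> r \<in> TP_orbit g p \<Longrightarrow> is_state r"
  unfolding TP_orbit_def using is_state_TP_mult by blast

section \<open>The excess function and the thermomajorization curve\<close>

locale positive_state =
  fixes g :: "real^'n::finite"
  assumes g_pos: "\<And>i. 0 < g $ i" and g_sum: "(\<Sum>i\<in>UNIV. g $ i) = 1"
begin

abbreviation gcum :: "(nat \<Rightarrow> 'n) \<Rightarrow> nat \<Rightarrow> real" where
  "gcum \<sigma> k \<equiv> prefix_sum \<sigma> (($) g) k"

lemma g_nonzero: "g $ i \<noteq> 0"
  using g_pos[of i] by simp

lemma gcum_mono: "k \<le> m \<Longrightarrow> gcum \<sigma> k \<le> gcum \<sigma> m"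
  unfolding prefix_sum_def by (rule sum_mono2) (auto intro: less_imp_le[OF g_pos])

lemma gcum_nonneg: "0 \<le> gcum \<sigma> k"
  using gcum_mono[of 0 k \<sigma>] by simp

lemma gcum_CARD: "enumeration \<sigma> \<Longrightarrow> gcum \<sigma> CARD('n) = 1"
  using prefix_sum_CARD g_sum by metis

lemma gcum_le_1: "enumeration \<sigma> \<Longrightarrow> k \<le> CARD('n) \<Longrightarrow> gcum \<sigma> k \<le> 1"
  using gcum_mono gcum_CARD by metis

lemma gcum_Suc_rank: "enumeration \<sigma> \<Longrightarrow> gcum \<sigma> (Suc (rank \<sigma> j)) = gcum \<sigma> (rank \<sigma> j) + g $ j"
  by (simp add: prefix_sum_Suc enumeration_rank)

lemma least_segment:
  assumes \<pi>: "enumeration \<pi>" and x: "0 \<le> x" "x \<le> 1"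
  defines "k \<equiv> LEAST k. x \<le> gcum \<pi> (Suc k)"
  shows "k < CARD('n)" "gcum \<pi> k \<le> x" "x \<le> gcum \<pi> (Suc k)"
proof -
  have ex: "x \<le> gcum \<pi> (Suc (CARD('n) - 1))"
    using gcum_CARD[OF \<pi>] x by simp
  show "x \<le> gcum \<pi> (Suc k)"
    unfolding k_def by (rule LeastI[of "\<lambda>k. x \<le> gcum \<pi> (Suc k)", OF ex])
  have "k \<le> CARD('n) - 1"
    unfolding k_def by (rule Least_le[of "\<lambda>k. x \<le> gcum \<pi> (Suc k)", OF ex])
  then show "k < CARD('n)"
    by (metis Suc_pred' le_imp_less_Suc zero_less_card_finite)
  show "gcum \<pi> k \<le> x"
  proof (cases k)
    case (Suc k')
    then show ?thesis
      using not_less_Least[of k' "\<lambda>k. x \<le> gcum \<pi> (Suc k)"] unfolding k_def by simp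
  qed (use x in simp)
qed

text \<open>The length of the part of \<open>[0, x]\<close> covered by the segment
  \<open>[gcum \<pi> (rank \<pi> j), gcum \<pi> (Suc (rank \<pi> j))]\<close> of length \<open>g $ j\<close>.\<close>
definition overlap :: "(nat \<Rightarrow> 'n) \<Rightarrow> 'n \<Rightarrow> real \<Rightarrow> real" where
  "overlap \<pi> j x =
     min (max x (gcum \<pi> (rank \<pi> j))) (gcum \<pi> (Suc (rank \<pi> j))) - gcum \<pi> (rank \<pi> j)"

lemma overlap_mono: "x \<le> y \<Longrightarrow> overlap \<pi> j x \<le> overlap \<pi> j y"
  unfolding overlap_def by auto

lemma overlap_0: "overlap \<pi> j 0 = 0"
  using gcum_nonneg[of \<pi> "rank \<pi> j"] gcum_mono[of "rank \<pi> j" "Suc (rank \<pi> j)" \<pi>]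
  unfolding overlap_def by simp

lemma
  assumes "enumeration \<pi>"
  shows overlap_nonneg: "0 \<le> overlap \<pi> j x"
    and overlap_le: "overlap \<pi> j x \<le> g $ j"
    and overlap_1: "overlap \<pi> j 1 = g $ j"
  using gcum_Suc_rank[OF assms, of j] g_pos[of j]
    gcum_le_1[OF assms, of "Suc (rank \<pi> j)"] rank_less_CARD[OF assms, of j]
  unfolding overlap_def by auto

lemma overlap_enumeration:
  assumes \<pi>: "enumeration \<pi>" and m: "m < CARD('n)"
    and x: "gcum \<pi> k \<le> x" "x \<le> gcum \<pi> (Suc k)"
  shows "overlap \<pi> (\<pi> m) x =
    (if m < k then g $ \<pi> m else if m = k then x - gcum \<pi> k else 0)"
proof -
  have "gcum \<pi> (Suc m) \<le> gcum \<pi> k" if "m < k"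
    using that by (intro gcum_mono) simp
  moreover have "gcum \<pi> (Suc k) \<le> gcum \<pi> m" if "k < m"
    using that by (intro gcum_mono) simp
  moreover have "gcum \<pi> m \<le> gcum \<pi> (Suc m)"
    by (intro gcum_mono) simp
  ultimately show ?thesis
    using x rank_enumeration[OF \<pi> m] by (auto simp: overlap_def prefix_sum_Suc)
qed

lemma sum_weighted_overlap:
  assumes \<pi>: "enumeration \<pi>" and k: "k < CARD('n)"
    and x: "gcum \<pi> k \<le> x" "x \<le> gcum \<pi> (Suc k)"
  shows "(\<Sum>j\<in>UNIV. v j * overlap \<pi> j x) =
    (\<Sum>i<k. v (\<pi> i) * g $ \<pi> i) + v (\<pi> k) * (x - gcum \<pi> k)"
proof -
  have "(\<Sum>j\<in>UNIV. v j * overlap \<pi> j x) =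
      (\<Sum>m<CARD('n). if m < k then v (\<pi> m) * g $ \<pi> m
                      else if m = k then v (\<pi> k) * (x - gcum \<pi> k) else 0)"
    unfolding sum_enumeration[OF \<pi>]
    by (rule sum.cong[OF refl]) (simp add: overlap_enumeration[OF \<pi> _ x])
  also have "\<dots> = (\<Sum>m<Suc k. if m < k then v (\<pi> m) * g $ \<pi> m
                      else if m = k then v (\<pi> k) * (x - gcum \<pi> k) else 0)"
    by (rule sum.mono_neutral_right) (use k in auto)
  finally show ?thesis by simp
qed

lemma sum_overlap:
  assumes \<pi>: "enumeration \<pi>" and x: "0 \<le> x" "x \<le> 1"
  shows "(\<Sum>j\<in>UNIV. overlap \<pi> j x) = x"
  using sum_weighted_overlap[OF \<pi> least_segment[OF \<pi> x], of "\<lambda>_. 1"]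
  by (simp add: prefix_sum_def)

definition excess :: "real^'n \<Rightarrow> real \<Rightarrow> real" where
  "excess q t = (\<Sum>i\<in>UNIV. max 0 (q $ i - t * g $ i))"

lemma excess_nonneg: "0 \<le> excess q t"
  unfolding excess_def by (rule sum_nonneg) simp

lemma sum_minus_scaled_g: "(\<Sum>i\<in>UNIV. q $ i) = 1 \<Longrightarrow> (\<Sum>i\<in>UNIV. q $ i - t * g $ i) = 1 - t"
  using g_sum by (simp add: sum_subtractf sum_distrib_left[symmetric])

lemma one_minus_le_excess: "(\<Sum>i\<in>UNIV. q $ i) = 1 \<Longrightarrow> 1 - t \<le> excess q t"
  unfolding excess_def sum_minus_scaled_g[symmetric] by (rule sum_mono) simp

lemma prefix_sum_le_excess:
  assumes \<sigma>: "enumeration \<sigma>" and k: "k \<le> CARD('n)"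
  shows "prefix_sum \<sigma> (($) q) k - t * gcum \<sigma> k \<le> excess q t"
proof -
  have "prefix_sum \<sigma> (($) q) k - t * gcum \<sigma> k = (\<Sum>i<k. q $ \<sigma> i - t * g $ \<sigma> i)"
    by (simp add: prefix_sum_def sum_subtractf sum_distrib_left)
  also have "\<dots> \<le> (\<Sum>i<k. max 0 (q $ \<sigma> i - t * g $ \<sigma> i))"
    by (rule sum_mono) simp
  also have "\<dots> \<le> (\<Sum>i<CARD('n). max 0 (q $ \<sigma> i - t * g $ \<sigma> i))"
    by (rule sum_mono2) (use k in auto)
  also have "\<dots> = excess q t"
    unfolding excess_def sum_enumeration[OF \<sigma>] ..
  finally show ?thesis .
qed

lemma excess_eq_prefix_sum:
  assumes \<pi>: "enumeration \<pi>" and k: "k \<le> CARD('n)"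
    and above: "\<And>i. i < k \<Longrightarrow> t \<le> q $ \<pi> i / g $ \<pi> i"
    and below: "\<And>i. k \<le> i \<Longrightarrow> i < CARD('n) \<Longrightarrow> q $ \<pi> i / g $ \<pi> i \<le> t"
  shows "excess q t = prefix_sum \<pi> (($) q) k - t * gcum \<pi> k"
proof -
  have "max 0 (q $ \<pi> m - t * g $ \<pi> m) = (if m < k then q $ \<pi> m - t * g $ \<pi> m else 0)"
    if "m < CARD('n)" for m
    using above[of m] below[of m] that g_pos[of "\<pi> m"]
    by (auto simp: le_divide_eq divide_le_eq)
  then have "excess q t = (\<Sum>m<CARD('n). if m < k then q $ \<pi> m - t * g $ \<pi> m else 0)"
    unfolding excess_def sum_enumeration[OF \<pi>] by (intro sum.cong) auto
  also have "\<dots> = (\<Sum>m<k. q $ \<pi> m - t * g $ \<pi> m)"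
  proof -
    have "{..<CARD('n)} \<inter> {m. m < k} = {..<k}" using k by auto
    then show ?thesis by (simp add: sum.If_cases)
  qed
  finally show ?thesis
    by (simp add: prefix_sum_def sum_subtractf sum_distrib_left)
qed

lemma excess_eq_0:
  assumes "\<And>i. q $ i \<le> t * g $ i"
  shows "excess q t = 0"
  unfolding excess_def using assms by (intro sum.neutral) (simp add: max_absorb1)

lemma excess_eq_one_minus:
  assumes "(\<Sum>i\<in>UNIV. q $ i) = 1" and "\<And>i. t * g $ i \<le> q $ i"
  shows "excess q t = 1 - t"
  unfolding excess_def sum_minus_scaled_g[OF assms(1), symmetric]
  using assms(2) by (intro sum.cong) (simp_all add: max_absorb2)

lemma continuous_on_excess: "continuous_on S (excess q)"
  unfolding excess_def by (intro continuous_intros)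

lemma excess_le_excess_plus_l1: "excess q t \<le> excess r t + (\<Sum>i\<in>UNIV. \<bar>q $ i - r $ i\<bar>)"
proof -
  have "excess q t \<le> (\<Sum>i\<in>UNIV. max 0 (r $ i - t * g $ i) + \<bar>q $ i - r $ i\<bar>)"
    unfolding excess_def by (rule sum_mono) auto
  then show ?thesis by (simp add: excess_def sum.distrib)
qed

lemma tm_order_tm_perm: "tm_order g q (tm_perm g q)"
proof -
  have "\<exists>\<pi>. tm_order g q \<pi>"
    using exists_sorting_enumeration[of "\<lambda>i. q $ i / g $ i"] unfolding tm_order_def by simp
  then show ?thesis unfolding tm_perm_def by (rule someI_ex)
qed

lemma enumeration_tm_perm: "enumeration (tm_perm g q)"
  using tm_order_tm_perm unfolding tm_order_def by blast

lemma tm_perm_sorted: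
  "i \<le> j \<Longrightarrow> j < CARD('n) \<Longrightarrow>
    q $ tm_perm g q j / g $ tm_perm g q j \<le> q $ tm_perm g q i / g $ tm_perm g q i"
  using tm_order_tm_perm unfolding tm_order_def by blast

lemma tmX_eq_gcum: "tmX g q k = gcum (tm_perm g q) k"
  by (simp add: tmX_def prefix_sum_def)

lemma tmY_eq_prefix_sum: "tmY g q k = prefix_sum (tm_perm g q) (($) q) k"
  by (simp add: tmY_def prefix_sum_def)

definition max_ratio :: "real^'n \<Rightarrow> real" where
  "max_ratio q = q $ tm_perm g q 0 / g $ tm_perm g q 0"

definition min_ratio :: "real^'n \<Rightarrow> real" where
  "min_ratio q = q $ tm_perm g q (CARD('n) - 1) / g $ tm_perm g q (CARD('n) - 1)"

lemma ratio_le_max_ratio: "q $ i / g $ i \<le> max_ratio q"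
  using tm_perm_sorted[of 0 "rank (tm_perm g q) i" q]
  by (simp add: max_ratio_def rank_less_CARD enumeration_rank enumeration_tm_perm)

lemma min_ratio_le_ratio: "min_ratio q \<le> q $ i / g $ i"
  using tm_perm_sorted[of "rank (tm_perm g q) i" "CARD('n) - 1" q]
    rank_less_CARD[OF enumeration_tm_perm, of q i]
  by (simp add: min_ratio_def enumeration_rank enumeration_tm_perm)

lemma min_ratio_le_max_ratio: "min_ratio q \<le> max_ratio q"
  using min_ratio_le_ratio ratio_le_max_ratio by (rule order_trans)

lemma le_max_ratio_g: "q $ i \<le> max_ratio q * g $ i"
  using ratio_le_max_ratio[of q i] g_pos[of i] by (simp add: divide_le_eq)

lemma min_ratio_g_le: "min_ratio q * g $ i \<le> q $ i"
  using min_ratio_le_ratio[of q i] g_pos[of i] by (simp add: le_divide_eq)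

text \<open>The curve \<open>\<beta>(q)\<close> as a function on \<open>[0, 1]\<close>: its slope on the segment belonging to \<open>j\<close>
  is \<open>q$j / g$j\<close>.\<close>
definition lorenz :: "real^'n \<Rightarrow> real \<Rightarrow> real" where
  "lorenz q x = (\<Sum>j\<in>UNIV. q $ j / g $ j * overlap (tm_perm g q) j x)"

lemma lorenz_on_segment:
  assumes k: "k < CARD('n)" and x: "gcum (tm_perm g q) k \<le> x" "x \<le> gcum (tm_perm g q) (Suc k)"
  shows "lorenz q x = prefix_sum (tm_perm g q) (($) q) k
    + q $ tm_perm g q k / g $ tm_perm g q k * (x - gcum (tm_perm g q) k)"
  unfolding lorenz_def sum_weighted_overlap[OF enumeration_tm_perm k x]
  by (simp add: prefix_sum_def g_nonzero)

lemma tm_curve_eq_lorenz: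
  assumes x: "0 \<le> x" "x \<le> 1"
  shows "tm_curve g q x = lorenz q x"
proof -
  define \<pi> where "\<pi> = tm_perm g q"
  define k where "k = (LEAST k. x \<le> gcum \<pi> (Suc k))"
  note seg = least_segment[OF enumeration_tm_perm x, of q, folded \<pi>_def, folded k_def]
  have "tm_curve g q x = prefix_sum \<pi> (($) q) k
      + (x - gcum \<pi> k) * (prefix_sum \<pi> (($) q) (Suc k) - prefix_sum \<pi> (($) q) k)
        / (gcum \<pi> (Suc k) - gcum \<pi> k)"
    unfolding tm_curve_def Let_def tmX_eq_gcum tmY_eq_prefix_sum \<pi>_def[symmetric] k_def[symmetric] ..
  also have "\<dots> = lorenz q x"
    using lorenz_on_segment[OF seg[unfolded \<pi>_def]] by (simp add: \<pi>_def prefix_sum_Suc)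
  finally show ?thesis .
qed

lemma lorenz_minus_le_excess:
  assumes x: "0 \<le> x" "x \<le> 1"
  shows "lorenz q x - t * x \<le> excess q t"
proof -
  define \<pi> where "\<pi> = tm_perm g q"
  have \<pi>: "enumeration \<pi>" unfolding \<pi>_def by (rule enumeration_tm_perm)
  have "t * x = (\<Sum>j\<in>UNIV. t * overlap \<pi> j x)"
    by (simp add: sum_distrib_left[symmetric] sum_overlap[OF \<pi> x])
  then have "lorenz q x - t * x = (\<Sum>j\<in>UNIV. (q $ j / g $ j - t) * overlap \<pi> j x)"
    unfolding lorenz_def \<pi>_def[symmetric] by (simp add: sum_subtractf[symmetric] algebra_simps)
  also have "\<dots> \<le> excess q t"
    unfolding excess_def
  proof (rule sum_mono)
    fix j
    have "(q $ j / g $ j - t) * overlap \<pi> j x \<le> max 0 ((q $ j / g $ j - t) * g $ j)"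
    proof (cases "0 \<le> q $ j / g $ j - t")
      case True
      then show ?thesis
        using overlap_le[OF \<pi>] by (intro max.coboundedI2 mult_left_mono) auto
    next
      case False
      then show ?thesis
        using overlap_nonneg[OF \<pi>] by (intro max.coboundedI1 mult_nonpos_nonneg) auto
    qed
    then show "(q $ j / g $ j - t) * overlap \<pi> j x \<le> max 0 (q $ j - t * g $ j)"
      by (simp add: algebra_simps g_nonzero)
  qed
  finally show ?thesis .
qed

text \<open>The supporting slope at \<open>x\<close> is the slope of the segment containing \<open>x\<close>.\<close>
lemma lorenz_eq_excess:
  assumes x: "0 \<le> x" "x \<le> 1"
  shows "\<exists>t. lorenz q x = excess q t + t * x"
proof -
  define \<pi> where "\<pi> = tm_perm g q"
  define k where "k = (LEAST k. x \<le> gcum \<pi> (Suc k))"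
  define t where "t = q $ \<pi> k / g $ \<pi> k"
  note seg = least_segment[OF enumeration_tm_perm x, of q, folded \<pi>_def, folded k_def]
  have "excess q t = prefix_sum \<pi> (($) q) k - t * gcum \<pi> k"
    using seg(1) tm_perm_sorted[of _ k q] tm_perm_sorted[of k _ q]
    by (intro excess_eq_prefix_sum) (simp_all add: \<pi>_def t_def enumeration_tm_perm)
  moreover have "lorenz q x = prefix_sum \<pi> (($) q) k + t * (x - gcum \<pi> k)"
    using lorenz_on_segment[OF seg[unfolded \<pi>_def]] by (simp add: \<pi>_def t_def)
  ultimately have "lorenz q x = excess q t + t * x" by (simp add: algebra_simps)
  then show ?thesis ..
qed

lemma lorenz_0: "lorenz q 0 = 0"
  by (simp add: lorenz_def overlap_0)

lemma lorenz_1: "lorenz q 1 = (\<Sum>j\<in>UNIV. q $ j)"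
  by (simp add: lorenz_def overlap_1[OF enumeration_tm_perm] g_nonzero)

lemma lorenz_le_max_ratio:
  assumes x: "0 \<le> x" "x \<le> 1"
  shows "lorenz q x \<le> max_ratio q * x"
proof -
  define \<pi> where "\<pi> = tm_perm g q"
  have \<pi>: "enumeration \<pi>" unfolding \<pi>_def by (rule enumeration_tm_perm)
  have "lorenz q x \<le> (\<Sum>j\<in>UNIV. max_ratio q * overlap \<pi> j x)"
    unfolding lorenz_def \<pi>_def[symmetric]
    by (intro sum_mono mult_right_mono ratio_le_max_ratio overlap_nonneg[OF \<pi>])
  also have "\<dots> = max_ratio q * x"
    by (simp add: sum_distrib_left[symmetric] sum_overlap[OF \<pi> x])
  finally show ?thesis .
qed

lemma lorenz_le_one_minus_min_ratio:
  assumes x: "0 \<le> x" "x \<le> 1" and q: "(\<Sum>j\<in>UNIV. q $ j) = 1"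
  shows "lorenz q x \<le> 1 - min_ratio q * (1 - x)"
proof -
  define \<pi> where "\<pi> = tm_perm g q"
  have \<pi>: "enumeration \<pi>" unfolding \<pi>_def by (rule enumeration_tm_perm)
  have "(\<Sum>j\<in>UNIV. min_ratio q * (g $ j - overlap \<pi> j x))
      \<le> (\<Sum>j\<in>UNIV. q $ j / g $ j * (g $ j - overlap \<pi> j x))"
    using overlap_le[OF \<pi>] by (intro sum_mono mult_right_mono min_ratio_le_ratio) auto
  also have "\<dots> = lorenz q 1 - lorenz q x"
    unfolding lorenz_def \<pi>_def[symmetric] overlap_1[OF \<pi>]
    by (simp add: sum_subtractf algebra_simps)
  finally show ?thesis
    using q g_sum by (simp add: lorenz_1 sum_subtractf sum_distrib_left[symmetric] sum_overlap[OF \<pi> x])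
qed

lemma prefix_sum_le_lorenz:
  assumes \<sigma>: "enumeration \<sigma>" and k: "k \<le> CARD('n)"
    and excess_le: "\<And>t. excess q t \<le> excess p t"
  shows "prefix_sum \<sigma> (($) q) k \<le> lorenz p (gcum \<sigma> k)"
proof -
  obtain t where t: "lorenz p (gcum \<sigma> k) = excess p t + t * gcum \<sigma> k"
    using lorenz_eq_excess gcum_nonneg gcum_le_1[OF \<sigma> k] by blast
  show ?thesis
    using prefix_sum_le_excess[OF \<sigma> k, of q t] excess_le[of t] t by simp
qed

section \<open>The orbit as a sublevel set of the excess\<close>

lemma excess_TP_mult_le:
  assumes T: "T \<in> TP g"
  shows "excess (T *v p) t \<le> excess p t"
proof -
  have T_nonneg: "\<forall>i j. 0 \<le> T $ i $ j" and T_cols: "\<forall>j. (\<Sum>i\<in>UNIV. T $ i $ j) = 1"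
    and Tg: "T *v g = g"
    using T unfolding TP_def by auto
  have "(T *v p) $ i - t * g $ i = (T *v p) $ i - t * (T *v g) $ i" for i
    using Tg by simp
  then have row: "(T *v p) $ i - t * g $ i = (\<Sum>j\<in>UNIV. T $ i $ j * (p $ j - t * g $ j))" for i
    by (simp add: matrix_vector_mult_nth sum_subtractf sum_distrib_left algebra_simps)
  have "excess (T *v p) t \<le> (\<Sum>i\<in>UNIV. \<Sum>j\<in>UNIV. T $ i $ j * max 0 (p $ j - t * g $ j))"
    unfolding excess_def row
    using T_nonneg by (intro sum_mono max.boundedI sum_nonneg mult_left_mono) auto
  also have "\<dots> = (\<Sum>j\<in>UNIV. (\<Sum>i\<in>UNIV. T $ i $ j) * max 0 (p $ j - t * g $ j))"
    unfolding sum_distrib_right by (rule sum.swap)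
  also have "\<dots> = excess p t"
    using T_cols by (simp add: excess_def)
  finally show ?thesis .
qed

text \<open>The extreme point of \<open>TP_orbit g p\<close> that maximises every linear functional whose
  coefficients decrease along \<open>\<sigma>\<close>.\<close>
definition vertex :: "real^'n \<Rightarrow> (nat \<Rightarrow> 'n) \<Rightarrow> real^'n" where
  "vertex p \<sigma> = (\<chi> i. lorenz p (gcum \<sigma> (Suc (rank \<sigma> i))) - lorenz p (gcum \<sigma> (rank \<sigma> i)))"

definition vertex_process :: "real^'n \<Rightarrow> (nat \<Rightarrow> 'n) \<Rightarrow> real^'n^'n" where
  "vertex_process p \<sigma> = (\<chi> i j. (overlap (tm_perm g p) j (gcum \<sigma> (Suc (rank \<sigma> i)))
                               - overlap (tm_perm g p) j (gcum \<sigma> (rank \<sigma> i))) / g $ j)"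

lemma vertex_process_TP:
  assumes \<sigma>: "enumeration \<sigma>"
  shows "vertex_process p \<sigma> \<in> TP g"
proof -
  define \<pi> where "\<pi> = tm_perm g p"
  have \<pi>: "enumeration \<pi>" unfolding \<pi>_def by (rule enumeration_tm_perm)
  define a where "a i = gcum \<sigma> (rank \<sigma> i)" for i
  define b where "b i = gcum \<sigma> (Suc (rank \<sigma> i))" for i
  have ab: "0 \<le> a i" "a i \<le> b i" "b i \<le> 1" "b i - a i = g $ i" for i
    using gcum_nonneg gcum_Suc_rank[OF \<sigma>] g_pos[of i]
      gcum_le_1[OF \<sigma>, of "Suc (rank \<sigma> i)"] rank_less_CARD[OF \<sigma>, of i]
    by (auto simp: a_def b_def)
  have T: "vertex_process p \<sigma> $ i $ j = (overlap \<pi> j (b i) - overlap \<pi> j (a i)) / g $ j" for i j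
    by (simp add: vertex_process_def \<pi>_def a_def b_def)
  have cols: "(\<Sum>i\<in>UNIV. overlap \<pi> j (b i) - overlap \<pi> j (a i)) = g $ j" for j
  proof -
    have "(\<Sum>i\<in>UNIV. overlap \<pi> j (b i) - overlap \<pi> j (a i))
        = (\<Sum>k<CARD('n). overlap \<pi> j (gcum \<sigma> (Suc k)) - overlap \<pi> j (gcum \<sigma> k))"
      unfolding a_def b_def by (rule sum_rank[OF \<sigma>])
    also have "\<dots> = g $ j"
      using sum_lessThan_telescope[of "\<lambda>k. overlap \<pi> j (gcum \<sigma> k)" "CARD('n)"]
      by (simp add: gcum_CARD[OF \<sigma>] overlap_1[OF \<pi>] overlap_0)
    finally show ?thesis .
  qed
  have rows: "(\<Sum>j\<in>UNIV. overlap \<pi> j (b i) - overlap \<pi> j (a i)) = g $ i" for i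
    using sum_overlap[OF \<pi>, of "b i"] sum_overlap[OF \<pi>, of "a i"] ab[of i]
    by (simp add: sum_subtractf)
  show ?thesis
    unfolding TP_def
  proof (intro CollectI conjI allI)
    show "0 \<le> vertex_process p \<sigma> $ i $ j" for i j
      unfolding T using overlap_mono[OF ab(2)] g_pos[of j] by simp
    show "(\<Sum>i\<in>UNIV. vertex_process p \<sigma> $ i $ j) = 1" for j
      unfolding T sum_divide_distrib[symmetric] cols by (simp add: g_nonzero)
    show "vertex_process p \<sigma> *v g = g"
      unfolding vec_eq_iff matrix_vector_mult_nth T by (simp add: g_nonzero rows)
  qed
qed

lemma vertex_process_mult: "vertex_process p \<sigma> *v p = vertex p \<sigma>"
proof -
  have "(x - y) / g $ j * p $ j = p $ j / g $ j * x - p $ j / g $ j * y" for x y j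
    by (simp add: divide_simps algebra_simps)
  then show ?thesis
    unfolding vec_eq_iff matrix_vector_mult_nth vertex_process_def vertex_def lorenz_def
    by (simp add: sum_subtractf)
qed

lemma vertex_in_TP_orbit: "enumeration \<sigma> \<Longrightarrow> vertex p \<sigma> \<in> TP_orbit g p"
  unfolding TP_orbit_def using vertex_process_TP vertex_process_mult[symmetric] by blast

lemma inner_le_inner_vertex:
  assumes \<sigma>: "enumeration \<sigma>"
    and c_sorted: "\<And>i j. i \<le> j \<Longrightarrow> j < CARD('n) \<Longrightarrow> c $ \<sigma> j \<le> c $ \<sigma> i"
    and q: "is_state q" and p: "(\<Sum>j\<in>UNIV. p $ j) = 1"
    and excess_le: "\<And>t. excess q t \<le> excess p t"
  shows "inner c q \<le> inner c (vertex p \<sigma>)"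
proof -
  define L where "L k = lorenz p (gcum \<sigma> k)" for k
  define A where "A k = prefix_sum \<sigma> (($) q) k" for k
  have "inner c q = (\<Sum>k<CARD('n). c $ \<sigma> k * (A (Suc k) - A k))"
    by (simp add: inner_vec_def sum_enumeration[OF \<sigma>] A_def prefix_sum_Suc)
  moreover have "inner c (vertex p \<sigma>) = (\<Sum>k<CARD('n). c $ \<sigma> k * (L (Suc k) - L k))"
    by (simp add: inner_vec_def vertex_def sum_enumeration[OF \<sigma>] L_def rank_enumeration[OF \<sigma>])
  moreover have "0 \<le> (\<Sum>k<CARD('n). c $ \<sigma> k * ((L - A) (Suc k) - (L - A) k))"
  proof (rule summation_by_parts_nonneg)
    show "0 \<le> (L - A) k" if "k \<le> CARD('n)" for k
      using prefix_sum_le_lorenz[OF \<sigma> that excess_le] by (simp add: L_def A_def)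
    show "(L - A) 0 = 0"
      by (simp add: L_def A_def lorenz_0)
    show "(L - A) CARD('n) = 0"
      using q p by (simp add: L_def A_def prefix_sum_CARD[OF \<sigma>] g_sum lorenz_1 is_state_def)
  qed (simp add: c_sorted)
  moreover have "(\<Sum>k<CARD('n). c $ \<sigma> k * ((L - A) (Suc k) - (L - A) k))
      = (\<Sum>k<CARD('n). c $ \<sigma> k * (L (Suc k) - L k))
        - (\<Sum>k<CARD('n). c $ \<sigma> k * (A (Suc k) - A k))"
    by (simp add: sum_subtractf[symmetric] algebra_simps)
  ultimately show ?thesis by linarith
qed

lemma in_TP_orbit_if_excess_le:
  assumes p: "is_state p" and q: "is_state q" and excess_le: "\<And>t. excess q t \<le> excess p t"
  shows "q \<in> TP_orbit g p"
proof (rule ccontr)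
  assume "q \<notin> TP_orbit g p"
  then obtain a b where ab: "inner a q < b" "\<forall>x\<in>TP_orbit g p. b < inner a x"
    using separating_hyperplane_closed_point[OF convex_TP_orbit closed_TP_orbit] by blast
  obtain \<sigma> where \<sigma>: "enumeration \<sigma>"
    and sorted: "\<forall>i j. i \<le> j \<and> j < CARD('n) \<longrightarrow> (- a) $ \<sigma> j \<le> (- a) $ \<sigma> i"
    using exists_sorting_enumeration[of "\<lambda>i. (- a) $ i"] by blast
  have "inner (- a) q \<le> inner (- a) (vertex p \<sigma>)"
    using p sorted by (intro inner_le_inner_vertex[OF \<sigma> _ q _ excess_le]) (auto simp: is_state_def)
  moreover have "b < inner a (vertex p \<sigma>)"
    using ab(2) vertex_in_TP_orbit[OF \<sigma>] by blast
  ultimately show False using ab(1) by simp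
qed

end

section \<open>The relative interior of the orbit\<close>

lemma in_interior_of_top_of_set_iff:
  fixes x :: "'a::metric_space"
  shows "x \<in> top_of_set T interior_of S \<longleftrightarrow> x \<in> T \<and> (\<exists>e>0. T \<inter> ball x e \<subseteq> S)"
proof
  assume "x \<in> top_of_set T interior_of S"
  then obtain U where U: "openin (top_of_set T) U" "x \<in> U" "U \<subseteq> S"
    unfolding interior_of_def by blast
  then show "x \<in> T \<and> (\<exists>e>0. T \<inter> ball x e \<subseteq> S)"
    unfolding openin_contains_ball by blast
next
  assume "x \<in> T \<and> (\<exists>e>0. T \<inter> ball x e \<subseteq> S)"
  then obtain e where "x \<in> T" "0 < e" "T \<inter> ball x e \<subseteq> S" by blast
  moreover have "openin (top_of_set T) (T \<inter> ball x e)"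
    by (simp add: openin_open_Int)
  ultimately show "x \<in> top_of_set T interior_of S"
    unfolding interior_of_def by auto
qed

lemma continuous_pos_uniform_bound:
  fixes f :: "real \<Rightarrow> real"
  assumes "a \<le> b" and "continuous_on {a..b} f" and "\<And>t. a \<le> t \<Longrightarrow> t \<le> b \<Longrightarrow> 0 < f t"
  shows "\<exists>\<delta>>0. \<forall>t. a \<le> t \<longrightarrow> t \<le> b \<longrightarrow> \<delta> \<le> f t"
proof -
  obtain t0 where "t0 \<in> {a..b}" "\<forall>t\<in>{a..b}. f t0 \<le> f t"
    using continuous_attains_inf[OF compact_Icc _ assms(2)] assms(1) by auto
  then show ?thesis
    using assms(3) by (intro exI[of _ "f t0"]) auto
qed

context positive_state
begin

lemma excess_le_if_in_TP_orbit: "q \<in> TP_orbit g p \<Longrightarrow> excess q t \<le> excess p t"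
  unfolding TP_orbit_def using excess_TP_mult_le by blast

lemma elbows_below_iff:
  assumes "2 \<le> CARD('n)"
  shows "(\<forall>(x, y) \<in> elbows g r. y < tm_curve g p x) \<longleftrightarrow>
    (\<forall>m. 0 < m \<longrightarrow> m < CARD('n) \<longrightarrow>
       prefix_sum (tm_perm g r) (($) r) m < lorenz p (gcum (tm_perm g r) m))"
proof -
  have "{m. 0 < m \<and> m < CARD('n)} = Suc ` {..CARD('n) - 2}"
  proof (intro set_eqI iffI)
    fix m assume "m \<in> {m. 0 < m \<and> m < CARD('n)}"
    then show "m \<in> Suc ` {..CARD('n) - 2}"
      by (intro image_eqI[of _ _ "m - 1"]) auto
  qed (use assms in auto)
  then have "elbows g r = (\<lambda>m. (gcum (tm_perm g r) m, prefix_sum (tm_perm g r) (($) r) m))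
      ` {m. 0 < m \<and> m < CARD('n)}"
    unfolding elbows_def tmX_eq_gcum tmY_eq_prefix_sum by auto
  moreover have "0 \<le> gcum (tm_perm g r) m" "gcum (tm_perm g r) m \<le> 1" if "m < CARD('n)" for m
    using gcum_nonneg gcum_le_1[OF enumeration_tm_perm] that by auto
  ultimately show ?thesis
    by (auto simp: tm_curve_eq_lorenz)
qed

lemma elbows_below_if_interior:
  assumes d: "2 \<le> CARD('n)"
    and r: "r \<in> top_of_set hyperplane1 interior_of TP_orbit g p"
  shows "\<forall>(x, y) \<in> elbows g r. y < tm_curve g p x"
  unfolding elbows_below_iff[OF d]
proof (intro allI impI)
  fix m assume m: "0 < m" "m < CARD('n)"
  define \<pi> where "\<pi> = tm_perm g r"
  have \<pi>: "enumeration \<pi>" unfolding \<pi>_def by (rule enumeration_tm_perm)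
  obtain e where e: "0 < e" "hyperplane1 \<inter> ball r e \<subseteq> TP_orbit g p" and "r \<in> hyperplane1"
    using r unfolding in_interior_of_top_of_set_iff by blast
  define r' where "r' = r + (e / 4) *\<^sub>R (axis (\<pi> 0) 1 - axis (\<pi> (CARD('n) - 1)) 1)"
  have "norm (axis (\<pi> 0) (1::real) - axis (\<pi> (CARD('n) - 1)) 1) \<le> 2"
    using norm_triangle_ineq4[of "axis (\<pi> 0) (1::real)" "axis (\<pi> (CARD('n) - 1)) 1"] by simp
  then have "r' \<in> ball r e"
    using e(1) by (simp add: r'_def dist_norm)
  moreover have "(\<Sum>i\<in>UNIV. r' $ i) = (\<Sum>i\<in>UNIV. r $ i)
      + e / 4 * (\<Sum>i\<in>UNIV. axis (\<pi> 0) 1 $ i - axis (\<pi> (CARD('n) - 1)) 1 $ i)"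
    by (simp add: r'_def sum.distrib sum_distrib_left)
  then have "r' \<in> hyperplane1"
    using \<open>r \<in> hyperplane1\<close> by (simp add: hyperplane1_def sum_subtractf sum_axis)
  ultimately have "r' \<in> TP_orbit g p"
    using e(2) by blast
  then have "prefix_sum \<pi> (($) r') m \<le> lorenz p (gcum \<pi> m)"
    using m by (intro prefix_sum_le_lorenz[OF \<pi>] excess_le_if_in_TP_orbit) auto
  then show "prefix_sum \<pi> (($) r) m < lorenz p (gcum \<pi> m)"
    using prefix_sum_transfer[OF \<pi> m, of r "e / 4"] e(1) by (simp add: r'_def)
qed

lemma excess_at_breakpoint:
  "\<exists>k \<le> CARD('n). excess q t = prefix_sum (tm_perm g q) (($) q) k - t * gcum (tm_perm g q) k"
proof -
  define \<pi> where "\<pi> = tm_perm g q"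
  define k where "k = (LEAST k. CARD('n) \<le> k \<or> q $ \<pi> k / g $ \<pi> k \<le> t)"
  have k: "k \<le> CARD('n)"
    unfolding k_def by (rule Least_le) simp
  have "CARD('n) \<le> k \<or> q $ \<pi> k / g $ \<pi> k \<le> t"
    unfolding k_def by (rule LeastI[of _ "CARD('n)"]) simp
  then have below: "q $ \<pi> i / g $ \<pi> i \<le> t" if "k \<le> i" "i < CARD('n)" for i
    using that tm_perm_sorted[of k i q] by (fastforce simp: \<pi>_def)
  have above: "t \<le> q $ \<pi> i / g $ \<pi> i" if "i < k" for i
    using not_less_Least[of i "\<lambda>k. CARD('n) \<le> k \<or> q $ \<pi> k / g $ \<pi> k \<le> t"] that
    unfolding k_def[symmetric] by auto
  show ?thesis
    using excess_eq_prefix_sum[OF enumeration_tm_perm k, of t q] above below k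
    unfolding \<pi>_def by blast
qed

lemma excess_pos_if_less_max_ratio:
  assumes "t < max_ratio p"
  shows "0 < excess p t"
proof -
  define j where "j = tm_perm g p 0"
  have "t * g $ j < p $ j"
    using assms g_pos[of j] by (simp add: max_ratio_def j_def less_divide_eq)
  moreover have "max 0 (p $ j - t * g $ j) \<le> excess p t"
    unfolding excess_def by (rule member_le_sum) auto
  ultimately show ?thesis by linarith
qed

lemma one_minus_less_excess_if_min_ratio_less:
  assumes p: "(\<Sum>i\<in>UNIV. p $ i) = 1" and t: "min_ratio p < t"
  shows "1 - t < excess p t"
proof -
  define j where "j = tm_perm g p (CARD('n) - 1)"
  have "p $ j < t * g $ j"
    using t g_pos[of j] by (simp add: min_ratio_def j_def divide_less_eq)
  then have "(\<Sum>i\<in>UNIV. p $ i - t * g $ i) < excess p t"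
    unfolding excess_def by (intro sum_strict_mono_ex1 bexI[of _ j]) auto
  then show ?thesis
    using sum_minus_scaled_g[OF p] by simp
qed

lemma max_ratio_less_if_elbows_below:
  assumes d: "2 \<le> CARD('n)"
    and below: "prefix_sum (tm_perm g r) (($) r) 1 < lorenz p (gcum (tm_perm g r) 1)"
  shows "max_ratio r < max_ratio p"
proof -
  define j where "j = tm_perm g r 0"
  have "0 \<le> g $ j" "g $ j \<le> 1"
    using gcum_le_1[OF enumeration_tm_perm, of 1 r] d g_pos[of j]
    by (simp_all add: prefix_sum_def j_def)
  then have "r $ j < max_ratio p * g $ j"
    using below lorenz_le_max_ratio[of "g $ j" p] by (simp add: prefix_sum_def j_def)
  then show ?thesis
    using g_pos[of j] by (simp add: max_ratio_def j_def divide_less_eq)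
qed

lemma min_ratio_less_if_elbows_below:
  assumes p: "(\<Sum>i\<in>UNIV. p $ i) = 1" and r: "(\<Sum>i\<in>UNIV. r $ i) = 1"
    and below: "prefix_sum (tm_perm g r) (($) r) (CARD('n) - 1)
      < lorenz p (gcum (tm_perm g r) (CARD('n) - 1))"
  shows "min_ratio p < min_ratio r"
proof -
  define \<pi> where "\<pi> = tm_perm g r"
  define N where "N = CARD('n) - 1"
  have \<pi>: "enumeration \<pi>" unfolding \<pi>_def by (rule enumeration_tm_perm)
  have SucN: "Suc N = CARD('n)" unfolding N_def by simp
  have gN: "gcum \<pi> N = 1 - g $ \<pi> N"
    using gcum_CARD[OF \<pi>] by (simp flip: SucN add: prefix_sum_Suc)
  have rN: "prefix_sum \<pi> (($) r) N = 1 - r $ \<pi> N"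
    using prefix_sum_CARD[OF \<pi>, of "($) r"] r by (simp flip: SucN add: prefix_sum_Suc)
  have "0 \<le> gcum \<pi> N" "gcum \<pi> N \<le> 1"
    using gcum_nonneg gcum_le_1[OF \<pi>] by (auto simp: N_def)
  then have "1 - r $ \<pi> N < 1 - min_ratio p * g $ \<pi> N"
    using below lorenz_le_one_minus_min_ratio[of "gcum \<pi> N" p] p gN rN
    by (simp add: \<pi>_def N_def)
  then show ?thesis
    using g_pos[of "\<pi> N"] by (simp add: min_ratio_def \<pi>_def N_def less_divide_eq)
qed

lemma excess_less_if_elbows_below:
  assumes p: "(\<Sum>i\<in>UNIV. p $ i) = 1" and r: "(\<Sum>i\<in>UNIV. r $ i) = 1"
    and below: "\<And>m. 0 < m \<Longrightarrow> m < CARD('n) \<Longrightarrow>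
      prefix_sum (tm_perm g r) (($) r) m < lorenz p (gcum (tm_perm g r) m)"
    and t: "min_ratio p < t" "t < max_ratio p"
  shows "excess r t < excess p t"
proof -
  define \<pi> where "\<pi> = tm_perm g r"
  have \<pi>: "enumeration \<pi>" unfolding \<pi>_def by (rule enumeration_tm_perm)
  obtain k where k: "k \<le> CARD('n)" and excess_r: "excess r t = prefix_sum \<pi> (($) r) k - t * gcum \<pi> k"
    using excess_at_breakpoint unfolding \<pi>_def by blast
  consider "k = 0" | "k = CARD('n)" | "0 < k" "k < CARD('n)"
    using k by linarith
  then show ?thesis
  proof cases
    case 1
    then show ?thesis
      using excess_r excess_pos_if_less_max_ratio[OF t(2)] by simp
  next
    case 2
    then show ?thesis
      using excess_r prefix_sum_CARD[OF \<pi>] gcum_CARD[OF \<pi>] r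
        one_minus_less_excess_if_min_ratio_less[OF p t(1)] by simp
  next
    case 3
    then have "0 \<le> gcum \<pi> k" "gcum \<pi> k \<le> 1"
      using gcum_nonneg gcum_le_1[OF \<pi>] by auto
    then show ?thesis
      using excess_r below[OF 3] lorenz_minus_le_excess[of "gcum \<pi> k" p t]
      by (simp add: \<pi>_def)
  qed
qed

lemma excess_le_if_close:
  assumes p: "(\<Sum>i\<in>UNIV. p $ i) = 1" and q: "(\<Sum>i\<in>UNIV. q $ i) = 1"
    and upper: "\<And>i. q $ i \<le> t0 * g $ i" and lower: "\<And>i. t1 * g $ i \<le> q $ i"
    and gap: "\<And>t. t1 \<le> t \<Longrightarrow> t \<le> t0 \<Longrightarrow> excess r t + (\<Sum>i\<in>UNIV. \<bar>q $ i - r $ i\<bar>) \<le> excess p t"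
  shows "excess q t \<le> excess p t"
proof -
  consider "t0 \<le> t" | "t \<le> t1" | "t1 \<le> t" "t \<le> t0"
    by linarith
  then show ?thesis
  proof cases
    case 1
    then have "q $ i \<le> t * g $ i" for i
      using upper[of i] g_pos[of i] by (meson mult_right_mono less_imp_le order_trans)
    then show ?thesis
      using excess_eq_0 excess_nonneg by metis
  next
    case 2
    then have "t * g $ i \<le> q $ i" for i
      using lower[of i] g_pos[of i] by (meson mult_right_mono less_imp_le order_trans)
    then show ?thesis
      using excess_eq_one_minus[OF q] one_minus_le_excess[OF p] by metis
  next
    case 3
    then show ?thesis
      using gap excess_le_excess_plus_l1[of q t r] by fastforce
  qed
qed

lemma in_TP_orbit_if_near:
  fixes \<epsilon> :: real
  assumes p: "is_state p" and r: "is_state r" and t1: "0 \<le> t1"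
    and q: "q \<in> hyperplane1" and close: "\<And>i. \<bar>q $ i - r $ i\<bar> \<le> \<epsilon>"
    and upper: "\<And>i. r $ i + \<epsilon> \<le> t0 * g $ i" and lower: "\<And>i. t1 * g $ i \<le> r $ i - \<epsilon>"
    and gap: "\<And>t. t1 \<le> t \<Longrightarrow> t \<le> t0 \<Longrightarrow> excess r t + CARD('n) * \<epsilon> \<le> excess p t"
  shows "q \<in> TP_orbit g p"
proof -
  have q_sum: "(\<Sum>i\<in>UNIV. q $ i) = 1"
    using q by (simp add: hyperplane1_def)
  have q_bounds: "q $ i \<le> t0 * g $ i" "t1 * g $ i \<le> q $ i" for i
    using close[of i] upper[of i] lower[of i] by auto
  have "(\<Sum>i\<in>UNIV. \<bar>q $ i - r $ i\<bar>) \<le> CARD('n) * \<epsilon>"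
    using sum_mono[of UNIV "\<lambda>i. \<bar>q $ i - r $ i\<bar>" "\<lambda>_. \<epsilon>", OF close] by simp
  then have "excess q t \<le> excess p t" for t
    using p q_sum q_bounds gap
    by (intro excess_le_if_close[of p q t0 t1 r]) (force simp: is_state_def)+
  moreover have "is_state q"
    using q_sum q_bounds(2) t1 g_pos unfolding is_state_def
    by (meson mult_nonneg_nonneg less_imp_le order_trans)
  ultimately show ?thesis
    using in_TP_orbit_if_excess_le[OF p] by blast
qed

lemma ball_subset_TP_orbit_if_excess_less:
  assumes p: "is_state p" and r: "is_state r"
    and t: "0 \<le> t1" "t1 < min_ratio r" "max_ratio r < t0"
    and gap: "\<And>t. t1 \<le> t \<Longrightarrow> t \<le> t0 \<Longrightarrow> excess r t < excess p t"
  shows "\<exists>\<epsilon>>0. hyperplane1 \<inter> ball r \<epsilon> \<subseteq> TP_orbit g p"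
proof -
  obtain \<delta> where \<delta>: "0 < \<delta>" "\<And>t. t1 \<le> t \<Longrightarrow> t \<le> t0 \<Longrightarrow> \<delta> \<le> excess p t - excess r t"
    using continuous_pos_uniform_bound[of t1 t0 "\<lambda>t. excess p t - excess r t"]
      t min_ratio_le_max_ratio[of r] gap
    by (force intro: continuous_on_diff continuous_on_excess)
  define gmin where "gmin = Min (range (($) g))"
  have gmin: "0 < gmin" "gmin \<le> g $ i" for i
    using g_pos Min_in[of "range (($) g)"] by (auto simp: gmin_def)
  define \<epsilon> where "\<epsilon> = min (\<delta> / CARD('n)) (min ((t0 - max_ratio r) * gmin) ((min_ratio r - t1) * gmin))"
  have "0 < \<epsilon>"
    using \<delta>(1) gmin(1) t by (simp add: \<epsilon>_def)
  moreover have "hyperplane1 \<inter> ball r \<epsilon> \<subseteq> TP_orbit g p"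
  proof
    fix q assume q: "q \<in> hyperplane1 \<inter> ball r \<epsilon>"
    have close: "\<bar>q $ i - r $ i\<bar> \<le> \<epsilon>" for i
      using component_le_norm_cart[of "q - r" i] q by (simp add: dist_norm norm_minus_commute)
    have upper: "r $ i + \<epsilon> \<le> t0 * g $ i" and lower: "t1 * g $ i \<le> r $ i - \<epsilon>" for i
      using mult_left_mono[OF gmin(2), of "t0 - max_ratio r" i]
        mult_left_mono[OF gmin(2), of "min_ratio r - t1" i]
        le_max_ratio_g[of r i] min_ratio_g_le[of r i] t
      by (auto simp: \<epsilon>_def algebra_simps)
    have "\<epsilon> \<le> \<delta> / CARD('n)"
      by (simp add: \<epsilon>_def)
    then have "CARD('n) * \<epsilon> \<le> \<delta>"
      by (simp add: le_divide_eq mult.commute)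
    then have "excess r t + CARD('n) * \<epsilon> \<le> excess p t" if "t1 \<le> t" "t \<le> t0" for t
      using \<delta>(2)[OF that] by linarith
    then show "q \<in> TP_orbit g p"
      using q by (intro in_TP_orbit_if_near[OF p r t(1) _ close upper lower]) auto
  qed
  ultimately show ?thesis by blast
qed

lemma interior_if_elbows_below:
  assumes d: "2 \<le> CARD('n)" and p: "is_state p" and r: "is_state r"
    and below: "\<forall>(x, y) \<in> elbows g r. y < tm_curve g p x"
  shows "r \<in> top_of_set hyperplane1 interior_of TP_orbit g p"
proof -
  have sums: "(\<Sum>i\<in>UNIV. p $ i) = 1" "(\<Sum>i\<in>UNIV. r $ i) = 1"
    using p r by (auto simp: is_state_def)
  note below' = below[unfolded elbows_below_iff[OF d], rule_format]
  have max_less: "max_ratio r < max_ratio p"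
    using d by (intro max_ratio_less_if_elbows_below below') auto
  have min_less: "min_ratio p < min_ratio r"
    using d by (intro min_ratio_less_if_elbows_below[OF sums] below') auto
  define t0 where "t0 = (max_ratio r + max_ratio p) / 2"
  define t1 where "t1 = (min_ratio p + min_ratio r) / 2"
  have "0 \<le> min_ratio p"
    using p g_pos unfolding min_ratio_def is_state_def by (simp add: less_imp_le)
  then have t: "0 \<le> t1" "t1 < min_ratio r" "max_ratio r < t0"
    using max_less min_less by (simp_all add: t0_def t1_def)
  have "excess r t < excess p t" if "t1 \<le> t" "t \<le> t0" for t
    using that max_less min_less
    by (intro excess_less_if_elbows_below[OF sums below']) (simp_all add: t0_def t1_def)
  then obtain \<epsilon> where "0 < \<epsilon>" "hyperplane1 \<inter> ball r \<epsilon> \<subseteq> TP_orbit g p"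
    using ball_subset_TP_orbit_if_excess_less[OF p r t] by blast
  moreover have "r \<in> hyperplane1"
    using sums(2) by (simp add: hyperplane1_def)
  ultimately show ?thesis
    unfolding in_interior_of_top_of_set_iff by blast
qed

end

lemma positive_state_gibbs: "positive_state (gibbs beta E)"
proof
  have Z: "0 < (\<Sum>j\<in>UNIV. exp (- beta * E j))"
    by (rule sum_pos) auto
  show "0 < gibbs beta E $ i" for i
    unfolding gibbs_def using Z by simp
  show "(\<Sum>i\<in>UNIV. gibbs beta E $ i) = 1"
    unfolding gibbs_def using Z by (simp add: sum_divide_distrib[symmetric])
qed

theorem mainTheorem5:
  fixes beta :: real and E :: "'n::finite \<Rightarrow> real" and p :: "real^'n"
  assumes "CARD('n) \<ge> 2"
    and "0 < beta"
    and "\<exists>i0. E i0 = 0"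
    and "inj E"
    and "is_state p"
  shows "(top_of_set hyperplane1) interior_of (TP_orbit (gibbs beta E) p) =
         {r. is_state r \<and>
             (\<forall>(x, y) \<in> elbows (gibbs beta E) r. y < tm_curve (gibbs beta E) p x)}"
proof -
  interpret positive_state "gibbs beta E"
    by (rule positive_state_gibbs)
  show ?thesis
  proof (intro set_eqI iffI)
    fix r assume r: "r \<in> top_of_set hyperplane1 interior_of TP_orbit (gibbs beta E) p"
    then have "is_state r"
      using interior_of_subset[of "top_of_set hyperplane1" "TP_orbit (gibbs beta E) p"]
        is_state_if_in_TP_orbit[OF assms(5)] by blast
    then show "r \<in> {r. is_state r \<and>
        (\<forall>(x, y) \<in> elbows (gibbs beta E) r. y < tm_curve (gibbs beta E) p x)}"
      using elbows_below_if_interior[OF assms(1) r] by simp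
  next
    fix r assume "r \<in> {r. is_state r \<and>
        (\<forall>(x, y) \<in> elbows (gibbs beta E) r. y < tm_curve (gibbs beta E) p x)}"
    then show "r \<in> top_of_set hyperplane1 interior_of TP_orbit (gibbs beta E) p"
      using interior_if_elbows_below[OF assms(1,5)] by simp
  qed
qed

end
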